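(* Assume Assumptions 1, 2 and 3 (stated in the context). Fix a triple $(i,j,k)$ and an interval $[T_0,T_1]\subseteq[0,T]$ with $T_0<T_1$, and let $\theta$ range over parameters for which $\bar{\mathcal{P}}_{ijk}(T_0,T_1,\theta)$ is defined. If $\theta$ varies so that for some $t\in[T_0,T_1]$ one has $\text{dist}(b_{ij}(t,\theta),o_k)\to d_0$, then $\bar{\mathcal{P}}_{ijk}(T_0,T_1,\theta)\to\infty$.
   Context: An articulated robot consists of finitely many rigid bodies. For a finite-dimensional trajectory parameter vector $\theta$ and $t\in[0,T]$, the $i$-th body occupies $b_i(t,\theta)\subset\mathbb{R}^3$; obstacles occupy $o\subset\mathbb{R}^3$; $d_0\ge0$ is a safe distance; $\text{dist}(A,B)$ is the shortest Euclidean distance between sets. Assumption 1: there are finite decompositions $b_i(t,\theta)=\bigcup_j b_{ij}(t,\theta)$, $o=\bigcup_k o_k$ such that each $(t,\theta)\mapsto\text{dist}(b_{ij}(t,\theta),o_k)$ is sufficiently smooth. Assumption 2: the feasible domain of $t$ and $\theta$ is bounded. Assumption 3: $\mathcal{P}$ is a sufficiently smooth, monotonically decreasing function on $(0,\infty)$ with $\lim_{x\to0}\mathcal{P}(x)=\infty$, $\lim_{x\to\infty}\mathcal{P}(x)=0$, and $\lim_{x\to0}x\mathcal{P}(x)=\infty$. Define $\mathcal{P}_{ijk}(t,\theta)=\mathcal{P}(\text{dist}(b_{ij}(t,\theta),o_k)-d_0)$ and $\bar{\mathcal{P}}_{ijk}(T_0,T_1,\theta)=\int_{T_0}^{T_1}\mathcal{P}_{ijk}(t,\theta)\,dt$.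 *)

theory Defs
  imports "HOL-Analysis.Analysis"
begin

definition penalty_assm :: "(real \<Rightarrow> real) \<Rightarrow> bool" where
  "penalty_assm P \<longleftrightarrow>
     (\<exists>P'. (\<forall>x>0. (P has_real_derivative P' x) (at x)) \<and> continuous_on {0<..} P') \<and>
     (\<forall>x y. 0 < x \<longrightarrow> x \<le> y \<longrightarrow> P y \<le> P x) \<and>
     filterlim P at_top (at_right 0) \<and>
     (P \<longlongrightarrow> 0) at_top \<and>
     filterlim (\<lambda>x. x * P x) at_top (at_right 0)"

text \<open>The penalty of piece b (= b_ij) against obstacle piece obs (= o_k) at time t, parameter th.\<close>
definition Pijk :: "(real \<Rightarrow> real) \<Rightarrow> real \<Rightarrow> (real \<Rightarrow> 'a \<Rightarrow> (real^3) set) \<Rightarrow> (real^3) set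
                    \<Rightarrow> real \<Rightarrow> 'a \<Rightarrow> real" where
  "Pijk P d0 b obs t th = P (setdist (b t th) obs - d0)"

definition barPijk :: "(real \<Rightarrow> real) \<Rightarrow> real \<Rightarrow> (real \<Rightarrow> 'a \<Rightarrow> (real^3) set) \<Rightarrow> (real^3) set
                    \<Rightarrow> real \<Rightarrow> real \<Rightarrow> 'a \<Rightarrow> real" where
  "barPijk P d0 b obs T0 T1 th = integral {T0..T1} (\<lambda>t. Pijk P d0 b obs t th)"

definition barPijk_defined :: "(real \<Rightarrow> real) \<Rightarrow> real \<Rightarrow> (real \<Rightarrow> 'a \<Rightarrow> (real^3) set) \<Rightarrow> (real^3) set
                    \<Rightarrow> real \<Rightarrow> real \<Rightarrow> 'a \<Rightarrow> bool" where
  "barPijk_defined P d0 b obs T0 T1 th \<longleftrightarrow>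
     (\<forall>t\<in>{T0..T1}. setdist (b t th) obs > d0) \<and>
     (\<lambda>t. Pijk P d0 b obs t th) integrable_on {T0..T1}"

end

theory Submission
  imports Defs
begin

text \<open>
  A distance function with continuous derivative is Lipschitz in time, uniformly over the
  bounded parameter set, with some constant \<open>L\<close>. So if the distance exceeds \<open>d\<^sub>0\<close> by only
  \<open>\<delta>\<close> at time \<open>t\<close>, it exceeds \<open>d\<^sub>0\<close> by at most \<open>(1 + L) \<delta>\<close> on a time interval of length
  \<open>\<delta>\<close> around \<open>t\<close>. Since \<open>P\<close> is decreasing, the integral is therefore at least
  \<open>\<delta> P((1 + L) \<delta>) = x P(x) / (1 + L)\<close> with \<open>x = (1 + L) \<delta>\<close>, and \<open>x P(x) \<rightarrow> \<infinity>\<close> as \<open>x \<rightarrow> 0\<^sup>+\<close>.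
\<close>

lemma continuous_derivative_imp_lipschitz_on_convex_subsets:
  fixes f :: "'a::real_normed_vector \<Rightarrow> 'b::real_normed_vector"
  assumes deriv: "\<And>z. z \<in> U \<Longrightarrow> (f has_derivative blinfun_apply (f' z)) (at z)"
    and cont: "continuous_on U f'" and K: "compact K" "K \<subseteq> U"
  obtains L where "0 \<le> L"
    and "\<And>C x y. convex C \<Longrightarrow> C \<subseteq> K \<Longrightarrow> x \<in> C \<Longrightarrow> y \<in> C \<Longrightarrow>
           norm (f x - f y) \<le> L * norm (x - y)"
proof -
  have "compact (f' ` K)"
    using K cont by (metis compact_continuous_image continuous_on_subset)
  then obtain B where B: "\<And>z. z \<in> K \<Longrightarrow> norm (f' z) \<le> B"
    by (metis compact_imp_bounded bounded_iff image_eqI)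
  have "norm (f x - f y) \<le> max B 0 * norm (x - y)"
    if C: "convex C" "C \<subseteq> K" "x \<in> C" "y \<in> C" for C x y
  proof (rule differentiable_bound[OF \<open>convex C\<close> _ _ \<open>x \<in> C\<close> \<open>y \<in> C\<close>])
    show "(f has_derivative blinfun_apply (f' z)) (at z within C)" if "z \<in> C" for z
      using deriv[of z] that C K has_derivative_at_withinI by blast
    show "onorm (blinfun_apply (f' z)) \<le> max B 0" if "z \<in> C" for z
      using B[of z] that C by (force simp: norm_blinfun.rep_eq[symmetric])
  qed
  then show ?thesis
    using that[of "max B 0"] by simp
qed

lemma penalty_assm_antimono:
  assumes "penalty_assm P" "0 < x" "x \<le> y"
  shows "P y \<le> P x"
  using assms unfolding penalty_assm_def by blast

lemma penalty_assm_nonneg: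
  assumes P: "penalty_assm P" and "0 < y"
  shows "0 \<le> P y"
proof (rule tendsto_upperbound)
  show "(P \<longlongrightarrow> 0) at_top"
    using P unfolding penalty_assm_def by blast
  show "eventually (\<lambda>z. P z \<le> P y) at_top"
    using eventually_ge_at_top[of y]
    by eventually_elim (use penalty_assm_antimono[OF P \<open>0 < y\<close>] in blast)
qed simp

lemma penalty_assm_scaled_tendsto_at_top:
  assumes P: "penalty_assm P" and L: "0 \<le> L"
    and \<delta>: "(\<delta> \<longlongrightarrow> 0) F" "eventually (\<lambda>n. 0 < \<delta> n) F"
  shows "filterlim (\<lambda>n. \<delta> n * P ((1 + L) * \<delta> n)) at_top F"
proof -
  define x where "x n = (1 + L) * \<delta> n" for n
  have "filterlim x (at_right 0) F"
  proof (rule tendsto_imp_filterlim_at_right)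
    show "(x \<longlongrightarrow> 0) F"
      using tendsto_mult_right_zero[OF \<delta>(1), of "1 + L"]
      by (simp add: x_def[abs_def] mult.commute[of "1 + L"])
    show "eventually (\<lambda>n. 0 < x n) F"
      using \<delta>(2) by eventually_elim (use L in \<open>simp add: x_def\<close>)
  qed
  moreover have "filterlim (\<lambda>x. x * P x) at_top (at_right 0)"
    using P unfolding penalty_assm_def by blast
  ultimately have "filterlim (\<lambda>n. inverse (1 + L) * (x n * P (x n))) at_top F"
    using L by (intro filterlim_tendsto_pos_mult_at_top[OF tendsto_const])
      (auto intro: filterlim_compose)
  moreover have "inverse (1 + L) * (x n * P (x n)) = \<delta> n * P ((1 + L) * \<delta> n)" for n
    using L by (simp add: x_def field_simps)
  ultimately show ?thesis
    by simp
qed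

lemma integral_ge_near_point:
  fixes f :: "real \<Rightarrow> real"
  assumes f: "f integrable_on {T0..T1}" "\<And>s. s \<in> {T0..T1} \<Longrightarrow> 0 \<le> f s"
    and t: "t \<in> {T0..T1}" and h: "0 \<le> h" "h \<le> T1 - T0"
    and c: "\<And>s. s \<in> {T0..T1} \<Longrightarrow> \<bar>s - t\<bar> \<le> h \<Longrightarrow> c \<le> f s"
  shows "h * c \<le> integral {T0..T1} f"
proof -
  define a where "a = min t (T1 - h)"
  have sub: "{a..a + h} \<subseteq> {T0..T1}"
    using t h unfolding a_def by auto
  have f_sub: "f integrable_on {a..a + h}"
    using integrable_on_subinterval[OF f(1) sub] .
  have "h * c = integral {a..a + h} (\<lambda>s. c)"
    using h by simp
  also have "\<dots> \<le> integral {a..a + h} f"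
  proof (rule integral_le[OF _ f_sub])
    show "c \<le> f s" if "s \<in> {a..a + h}" for s
      using that sub t by (intro c) (auto simp: a_def)
  qed (rule integrable_const_ivl)
  also have "\<dots> \<le> integral {T0..T1} f"
    using integral_subset_le[OF sub f_sub f(1)] f(2) by blast
  finally show ?thesis .
qed

lemma barPijk_ge_near_contact:
  assumes P: "penalty_assm P" and def: "barPijk_defined P d0 b obs T0 T1 p"
    and t: "t \<in> {T0..T1}" and L: "0 \<le> L"
    and lip: "\<And>s. s \<in> {T0..T1} \<Longrightarrow>
               \<bar>setdist (b s p) obs - setdist (b t p) obs\<bar> \<le> L * \<bar>s - t\<bar>"
    and small: "setdist (b t p) obs - d0 \<le> T1 - T0"
  shows "(setdist (b t p) obs - d0) * P ((1 + L) * (setdist (b t p) obs - d0))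
           \<le> barPijk P d0 b obs T0 T1 p"
proof -
  define \<delta> where "\<delta> = setdist (b t p) obs - d0"
  have gap: "d0 < setdist (b s p) obs" if "s \<in> {T0..T1}" for s
    using def that unfolding barPijk_defined_def by blast
  have "\<delta> * P ((1 + L) * \<delta>) \<le> integral {T0..T1} (\<lambda>s. Pijk P d0 b obs s p)"
  proof (rule integral_ge_near_point)
    show "(\<lambda>s. Pijk P d0 b obs s p) integrable_on {T0..T1}"
      using def unfolding barPijk_defined_def by blast
    show "0 \<le> Pijk P d0 b obs s p" if "s \<in> {T0..T1}" for s
      using penalty_assm_nonneg[OF P] gap[OF that] by (simp add: Pijk_def)
    show "0 \<le> \<delta>"
      using gap[OF t] by (simp add: \<delta>_def)
    show "P ((1 + L) * \<delta>) \<le> Pijk P d0 b obs s p" if "s \<in> {T0..T1}" "\<bar>s - t\<bar> \<le> \<delta>" for s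
    proof -
      have "L * \<bar>s - t\<bar> \<le> L * \<delta>"
        using that L by (intro mult_left_mono)
      then have "setdist (b s p) obs - d0 \<le> (1 + L) * \<delta>"
        using lip[OF that(1)] by (simp add: \<delta>_def algebra_simps)
      then show ?thesis
        using penalty_assm_antimono[OF P] gap[OF that(1)] by (simp add: Pijk_def)
    qed
  qed (use t small in \<open>auto simp: \<delta>_def\<close>)
  then show ?thesis
    by (simp add: barPijk_def \<delta>_def)
qed

theorem lemma2:
  fixes P :: "real \<Rightarrow> real" and d0 T T0 T1 :: real
    and b :: "real \<Rightarrow> 'a::euclidean_space \<Rightarrow> (real^3) set" and obs :: "(real^3) set"
    and Theta :: "'a set" and U :: "(real \<times> 'a) set"
    and Dd :: "real \<times> 'a \<Rightarrow> (real \<times> 'a) \<Rightarrow>\<^sub>L real"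
    and th :: "nat \<Rightarrow> 'a" and t :: "nat \<Rightarrow> real"
  assumes d0: "d0 \<ge> 0"
    and A1_open: "open U" and A1_dom: "{0..T} \<times> closure Theta \<subseteq> U"
    and A1_deriv: "\<And>z. z \<in> U \<Longrightarrow>
          ((\<lambda>(s, p). setdist (b s p) obs) has_derivative blinfun_apply (Dd z)) (at z)"
    and A1_cont: "continuous_on U Dd"
    and A2: "bounded Theta"
    and A3: "penalty_assm P"
    and T01: "0 \<le> T0" "T0 < T1" "T1 \<le> T"
    and th_dom: "\<And>n. th n \<in> Theta"
    and th_def: "\<And>n. barPijk_defined P d0 b obs T0 T1 (th n)"
    and t_in: "\<And>n. t n \<in> {T0..T1}"
    and lim: "(\<lambda>n. setdist (b (t n) (th n)) obs) \<longlonglongrightarrow> d0"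
  shows "filterlim (\<lambda>n. barPijk P d0 b obs T0 T1 (th n)) at_top sequentially"
proof -
  have "compact ({0..T} \<times> closure Theta)"
    using A2 by (intro compact_Times) (auto simp: compact_closure)
  then obtain L where L: "0 \<le> L" and lip_conv: "\<And>C x y. convex C \<Longrightarrow>
      C \<subseteq> {0..T} \<times> closure Theta \<Longrightarrow> x \<in> C \<Longrightarrow> y \<in> C \<Longrightarrow>
      norm ((\<lambda>(s, p). setdist (b s p) obs) x - (\<lambda>(s, p). setdist (b s p) obs) y)
        \<le> L * norm (x - y)"
    using continuous_derivative_imp_lipschitz_on_convex_subsets[OF A1_deriv A1_cont _ A1_dom]
    by blast
  have lip: "\<bar>setdist (b s (th n)) obs - setdist (b (t n) (th n)) obs\<bar> \<le> L * \<bar>s - t n\<bar>"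
    if "s \<in> {T0..T1}" for s n
    using lip_conv[of "{0..T} \<times> {th n}" "(s, th n)" "(t n, th n)"]
      that t_in[of n] T01 th_dom[of n] closure_subset
    by (auto intro: convex_Times)
  define \<delta> where "\<delta> n = setdist (b (t n) (th n)) obs - d0" for n
  have \<delta>_pos: "0 < \<delta> n" for n
    using th_def[of n] t_in[of n] unfolding barPijk_defined_def \<delta>_def by simp
  have \<delta>_lim: "\<delta> \<longlonglongrightarrow> 0"
    using tendsto_diff[OF lim tendsto_const[of d0]] by (simp add: \<delta>_def[abs_def])
  have "eventually (\<lambda>n. \<delta> n \<le> T1 - T0) sequentially"
    using order_tendstoD(2)[OF \<delta>_lim, of "T1 - T0"] T01(2) by (auto elim: eventually_mono)
  then have lower:
      "eventually (\<lambda>n. \<delta> n * P ((1 + L) * \<delta> n) \<le> barPijk P d0 b obs T0 T1 (th n)) sequentially"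
    by eventually_elim
      (use barPijk_ge_near_contact[OF A3 th_def t_in L lip] in \<open>simp add: \<delta>_def\<close>)
  have "filterlim (\<lambda>n. \<delta> n * P ((1 + L) * \<delta> n)) at_top sequentially"
    using penalty_assm_scaled_tendsto_at_top[OF A3 L \<delta>_lim] \<delta>_pos by simp
  then show ?thesis
    using lower by (rule filterlim_at_top_mono)
qed

end
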